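(* Let $n\ge2$, let $X\subset\mathbb{R}^n$ be finite with the Euclidean metric $d$, let $k\in\mathbb{N}$, and fix an increasing sequence $0=\epsilon_0<\epsilon_1<\epsilon_2<\cdots$. Let $i\in\mathbb{N}$. For every $\alpha$ with $\epsilon_{i-1}<\alpha\le\epsilon_i$: (1) $E(H(i)_\alpha)\subset E(G(X,\rho^X)_\alpha)$; (2) if $(p,q)\in E(G(X,\rho^X)_\alpha)$, then there is a path in $H(i)_\alpha$ joining $p$ and $q$.
   Context: DBSCAN$^*$: for $Y\subset X$ and $\epsilon>0$, $\mathcal{C}(Y,\epsilon)=\{p\in Y:|\{y\in Y:d(p,y)\le\epsilon\}|>k\}$, $\mathcal{N}(Y,\epsilon)=Y\setminus\mathcal{C}(Y,\epsilon)$, and $\mathcal{D}^*(Y,\epsilon)$ is the set of vertex sets of the connected components of the graph with vertex set $\mathcal{C}(Y,\epsilon)$ and an edge between distinct $p,q$ whenever $d(p,q)\le\epsilon$. For $Z\subset X$ and $p\in Z$, $\operatorname{core}^Z_k(p)$ is the distance from $p$ to a $k$-th nearest neighbour of $p$ in $Z$ (the $k$-th smallest value of $d(p,z)$, $z\in Z\setminus\{p\}$, with multiplicity) and $\rho^Z(p,q)=\max\{\operatorname{core}^Z_k(p),\operatorname{core}^Z_k(q),d(p,q)\}$ for $p\ne q$, $\rho^Z(p,p)=0$. Cubes (for a given $\epsilon>0$): $\mathcal{Q}(\epsilon)$ is the collection of closed cubes $\{x\in\mathbb{R}^n: j_i\frac{\epsilon}{2\sqrt n}\le x_i\le (j_i+1)\frac{\epsilon}{2\sqrt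 n}\}$, $j\in\mathbb{Z}^n$; $S^m=\{x:\max_i|x_i-s_i|\le m\frac{\epsilon}{2\sqrt n}\text{ for some }s\in S\}$; $\mathcal{I}(B)=\{S\in\mathcal{Q}(\epsilon):S\cap B\ne\emptyset\}$. For $A\subset X$, $S\in\mathcal{I}(A)$ is an interior cube of $A$ if $S^1\cap X\subset A$ and every $T\in\mathcal{Q}(\epsilon)$ with $T\subset S^1$ lies in $\mathcal{I}(A)$, otherwise a boundary cube; $\partial A$ is the union of boundary cubes. For $Z\subset\mathbb{R}^n$, integer $N\ge0$: $Z^N=\bigcup_{S\in\mathcal{I}(Z)}S^N$, $Z^N_C=Z^N\cap C$. $\mathfrak{n},\mathfrak{m}$ are the smallest integers with $\mathfrak{n}\ge\sqrt n-1$, $\mathfrak{m}\ge2\sqrt n$; $\mathfrak{N}=\mathfrak{n}+\mathfrak{m}$. $F(Y,\epsilon)=\bigcup_{C\in\mathcal{D}^*(Y,\epsilon)}(\partial C)^{\mathfrak{N}}_C\cup\mathcal{N}(Y,\epsilon)$, cubes in $\mathcal{Q}(\epsilon)$. Graphs: $G(Z,w)$ is the complete weighted graph on finite $Z$ with weights $w(p,q)$; for a weighted graph $G$ and $\alpha\ge0$, $G_\alpha$ has the same vertices and only the edges of weight $\le\alpha$; $E(G)$ is the edge set. The union $G\cup H$ of weighted graphs has vertex set $V(G)\cup V(H)$, edge set $E(G)\cup E(H)$, and weight on a common edge the minimum of the two weights. Construction: $X_1=X$, $X_{i+1}=F(X_i,\epsilon_i)$ for $i\ge1$; $H(0)$ is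 the graph on $X_1$ with no edges; for $i\ge0$, $H(i+1)=\bigcup_{C\in\mathcal{D}^*(X_{i+1},\epsilon_{i+1})}G\big(B_{\epsilon_{i+1}}(C),\rho^{B_{\epsilon_{i+1}}(C)}\big)_{\epsilon_{i+1}}\cup H(i)$, where $B_{\epsilon_{i+1}}(C)=\{y\in X_{i+1}: d(y,C)\le\epsilon_{i+1}\}$. *)

theory Defs
  imports "HOL-Analysis.Analysis" "HOL-Library.Multiset"
begin

definition side :: "real \<Rightarrow> 'n::finite itself \<Rightarrow> real" where
  "side e _ = e / (2 * sqrt (real CARD('n)))"

definition cube :: "real \<Rightarrow> int^'n::finite \<Rightarrow> (real^'n) set" where
  "cube e j = {x. \<forall>i. real_of_int (j$i) * side e TYPE('n) \<le> x$i
                   \<and> x$i \<le> (real_of_int (j$i) + 1) * side e TYPE('n)}"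

definition cubes :: "real \<Rightarrow> (real^'n::finite) set set" where
  "cubes e = range (cube e)"

definition thicken :: "real \<Rightarrow> nat \<Rightarrow> (real^'n::finite) set \<Rightarrow> (real^'n) set" where
  "thicken e m S = {x. \<exists>s\<in>S. \<forall>i. \<bar>x$i - s$i\<bar> \<le> real m * side e TYPE('n)}"

definition meeting_cubes :: "real \<Rightarrow> (real^'n::finite) set \<Rightarrow> (real^'n) set set" where
  "meeting_cubes e B = {S \<in> cubes e. S \<inter> B \<noteq> {}}"

definition interior_cube ::
  "(real^'n::finite) set \<Rightarrow> real \<Rightarrow> (real^'n) set \<Rightarrow> (real^'n) set \<Rightarrow> bool" where
  "interior_cube X e A S \<longleftrightarrow> S \<in> meeting_cubes e A \<and> thicken e 1 S \<inter> X \<subseteq> A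
     \<and> (\<forall>T\<in>cubes e. T \<subseteq> thicken e 1 S \<longrightarrow> T \<in> meeting_cubes e A)"

definition boundary_cubes_union ::
  "(real^'n::finite) set \<Rightarrow> real \<Rightarrow> (real^'n) set \<Rightarrow> (real^'n) set" where
  "boundary_cubes_union X e A = \<Union>{S \<in> meeting_cubes e A. \<not> interior_cube X e A S}"

definition cube_nbhd :: "real \<Rightarrow> nat \<Rightarrow> (real^'n::finite) set \<Rightarrow> (real^'n) set" where
  "cube_nbhd e N Z = (\<Union>S\<in>meeting_cubes e Z. thicken e N S)"

definition frakn :: "'n::finite itself \<Rightarrow> nat" where
  "frakn _ = nat \<lceil>sqrt (real CARD('n)) - 1\<rceil>"

definition frakm :: "'n::finite itself \<Rightarrow> nat" where
  "frakm _ = nat \<lceil>2 * sqrt (real CARD('n))\<rceil>"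

definition frakN :: "'n::finite itself \<Rightarrow> nat" where
  "frakN t = frakn t + frakm t"

definition core_points :: "nat \<Rightarrow> ('a::metric_space) set \<Rightarrow> real \<Rightarrow> 'a set" where
  "core_points k Y e = {p \<in> Y. card {y \<in> Y. dist p y \<le> e} > k}"

definition noise_points :: "nat \<Rightarrow> ('a::metric_space) set \<Rightarrow> real \<Rightarrow> 'a set" where
  "noise_points k Y e = Y - core_points k Y e"

definition core_rel :: "nat \<Rightarrow> ('a::metric_space) set \<Rightarrow> real \<Rightarrow> ('a \<times> 'a) set" where
  "core_rel k Y e = {(p, q). p \<in> core_points k Y e \<and> q \<in> core_points k Y e \<and> p \<noteq> q \<and> dist p q \<le> e}"

definition dbscan_clusters :: "nat \<Rightarrow> ('a::metric_space) set \<Rightarrow> real \<Rightarrow> 'a set set" where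
  "dbscan_clusters k Y e =
     {C. \<exists>p \<in> core_points k Y e. C = {q \<in> core_points k Y e. (p, q) \<in> (core_rel k Y e)\<^sup>*}}"

definition Fset :: "(real^'n::finite) set \<Rightarrow> nat \<Rightarrow> (real^'n) set \<Rightarrow> real \<Rightarrow> (real^'n) set" where
  "Fset X k Y e =
     (\<Union>C\<in>dbscan_clusters k Y e. cube_nbhd e (frakN TYPE('n)) (boundary_cubes_union X e C) \<inter> C)
     \<union> noise_points k Y e"

text \<open>k-th smallest distance from p to points of Z - {p}, with multiplicity (k \<ge> 1).\<close>
definition core_dist :: "nat \<Rightarrow> ('a::metric_space) set \<Rightarrow> 'a \<Rightarrow> real" where
  "core_dist k Z p = sorted_list_of_multiset (image_mset (dist p) (mset_set (Z - {p}))) ! (k - 1)"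

definition rho :: "nat \<Rightarrow> ('a::metric_space) set \<Rightarrow> 'a \<Rightarrow> 'a \<Rightarrow> real" where
  "rho k Z p q = (if p = q then 0 else max (max (core_dist k Z p) (core_dist k Z q)) (dist p q))"

text \<open>A weighted graph: vertex set and a partial weight function on ordered pairs
  (an edge (p,q), p \<noteq> q, is present iff its weight is defined; edges are symmetric).\<close>
type_synonym 'a wgraph = "'a set \<times> ('a \<times> 'a \<Rightarrow> real option)"

definition edges :: "'a wgraph \<Rightarrow> ('a \<times> 'a) set" where
  "edges G = {e. snd G e \<noteq> None}"

definition complete_wgraph :: "'a set \<Rightarrow> ('a \<Rightarrow> 'a \<Rightarrow> real) \<Rightarrow> 'a wgraph" where
  "complete_wgraph Z w = (Z, \<lambda>(p, q). if p \<in> Z \<and> q \<in> Z \<and> p \<noteq> q then Some (w p q) else None)"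

definition threshold :: "'a wgraph \<Rightarrow> real \<Rightarrow> 'a wgraph" where
  "threshold G \<alpha> = (fst G, \<lambda>e. case snd G e of None \<Rightarrow> None
                                   | Some x \<Rightarrow> if x \<le> \<alpha> then Some x else None)"

definition gunion :: "'a wgraph \<Rightarrow> 'a wgraph \<Rightarrow> 'a wgraph" where
  "gunion G H = (fst G \<union> fst H, \<lambda>e. case (snd G e, snd H e) of
                    (None, b) \<Rightarrow> b
                  | (Some a, None) \<Rightarrow> Some a
                  | (Some a, Some b) \<Rightarrow> Some (min a b))"

definition gUnion :: "'a wgraph set \<Rightarrow> 'a wgraph" where
  "gUnion Gs = (\<Union>(fst ` Gs), \<lambda>e. if \<exists>G\<in>Gs. snd G e \<noteq> None
                                 then Some (Min {x. \<exists>G\<in>Gs. snd G e = Some x}) else None)"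

text \<open>Xseq X k eps m = X_(m+1):  X_1 = X,  X_(m+2) = F(X_(m+1), eps_(m+1)).\<close>
fun Xseq :: "(real^'n::finite) set \<Rightarrow> nat \<Rightarrow> (nat \<Rightarrow> real) \<Rightarrow> nat \<Rightarrow> (real^'n) set" where
  "Xseq X k eps 0 = X"
| "Xseq X k eps (Suc m) = Fset X k (Xseq X k eps m) (eps (Suc m))"

definition Bset :: "('a::metric_space) set \<Rightarrow> real \<Rightarrow> 'a set \<Rightarrow> 'a set" where
  "Bset Y e C = {y \<in> Y. infdist y C \<le> e}"

fun Hseq :: "(real^'n::finite) set \<Rightarrow> nat \<Rightarrow> (nat \<Rightarrow> real) \<Rightarrow> nat \<Rightarrow> (real^'n) wgraph" where
  "Hseq X k eps 0 = (X, \<lambda>_. None)"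
| "Hseq X k eps (Suc i) =
     gunion
       (gUnion ((\<lambda>C. threshold
                       (complete_wgraph (Bset (Xseq X k eps i) (eps (Suc i)) C)
                          (rho k (Bset (Xseq X k eps i) (eps (Suc i)) C)))
                       (eps (Suc i)))
                ` dbscan_clusters k (Xseq X k eps i) (eps (Suc i))))
       (Hseq X k eps i)"

end

theory Submission
  imports Defs
begin

(* Part (1): an edge of H(i) carries the weight rho^B(p, q) for some B contained in X with more
   than k points, and core distances can only decrease when B grows to X.

   Part (2): for alpha > 0 the edges of G(X, rho^X)_alpha are exactly the pairs of distinct core
   points of (X, alpha) at distance at most alpha, and such a pair (p, q) is joined in H(i)_alpha
   by induction on d(p, q). If p and q are still core points of (X_i, alpha), the pair is an edge
   of H(i). Otherwise, say for p, the point p or one of its alpha-neighbours was removed by some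
   F(X_(m+1), eps_(m+1)) with m + 1 < i. From this one finds a point r with d(p, r) <= eps_(m+1)
   that F discards, deep inside a DBSCAN* cluster C of (X_(m+1), eps_(m+1)) containing p, and all
   of C is connected in H(m+1) at level eps_(m+1) <= alpha. If q is not in C, walking from r
   towards q leaves C through a boundary cube, and a point c of C in that cube satisfies
   d(c, q) < d(r, q) - eps_(m+1) <= d(p, q); induction applies to (c, q). *)

lemma finite_measure_induct [consumes 2, case_names less]:
  fixes f :: "'a \<Rightarrow> 'b::linorder"
  assumes "finite S" "x \<in> S"
    and step: "\<And>x. x \<in> S \<Longrightarrow> (\<And>y. y \<in> S \<Longrightarrow> f y < f x \<Longrightarrow> P y) \<Longrightarrow> P x"
  shows "P x"
proof -
  have "\<forall>x\<in>S. card {y \<in> S. f y < f x} = n \<longrightarrow> P x" for n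
  proof (induction n rule: less_induct)
    case (less n)
    show ?case
    proof (intro ballI impI)
      fix x assume x: "x \<in> S" "card {y \<in> S. f y < f x} = n"
      show "P x"
      proof (rule step[OF x(1)])
        fix y assume y: "y \<in> S" "f y < f x"
        have "{z \<in> S. f z < f y} \<subset> {z \<in> S. f z < f x}" using y by auto
        then have "card {z \<in> S. f z < f y} < n"
          using x(2) assms(1) by (auto intro: psubset_card_mono)
        then show "P y" using less.IH y(1) by blast
      qed
    qed
  qed
  then show ?thesis using assms(2) by blast
qed


section \<open>Neighbour counts and core distances\<close>

definition nbhd_card :: "('a::metric_space) set \<Rightarrow> 'a \<Rightarrow> real \<Rightarrow> nat" where
  "nbhd_card Z p b = card {z \<in> Z. z \<noteq> p \<and> dist p z \<le> b}"

lemma sorted_nth_le_iff: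
  fixes xs :: "'a::linorder list"
  assumes "sorted xs" "i < length xs"
  shows "xs ! i \<le> b \<longleftrightarrow> i < length (filter (\<lambda>x. x \<le> b) xs)"
proof
  assume h: "xs ! i \<le> b"
  have "{0..i} \<subseteq> {l. l < length xs \<and> xs ! l \<le> b}"
    using assms h sorted_nth_mono by fastforce
  then have "card {0..i} \<le> card {l. l < length xs \<and> xs ! l \<le> b}"
    by (intro card_mono) auto
  then show "i < length (filter (\<lambda>x. x \<le> b) xs)"
    by (simp add: length_filter_conv_card)
next
  assume h: "i < length (filter (\<lambda>x. x \<le> b) xs)"
  show "xs ! i \<le> b"
  proof (rule ccontr)
    assume "\<not> xs ! i \<le> b"
    then have "{l. l < length xs \<and> xs ! l \<le> b} \<subseteq> {0..<i}"
      using assms(1) sorted_nth_mono by (fastforce simp: not_le)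
    then have "card {l. l < length xs \<and> xs ! l \<le> b} \<le> i"
      using card_mono[of "{0..<i}"] by fastforce
    then show False using h by (simp add: length_filter_conv_card)
  qed
qed

lemma core_dist_le_iff:
  assumes "finite Z" "1 \<le> k" "k \<le> card (Z - {p})"
  shows "core_dist k Z p \<le> b \<longleftrightarrow> k \<le> nbhd_card Z p b"
proof -
  let ?M = "image_mset (dist p) (mset_set (Z - {p}))"
  let ?xs = "sorted_list_of_multiset ?M"
  have len: "length ?xs = card (Z - {p})"
    by (metis mset_sorted_list_of_multiset size_image_mset size_mset size_mset_set)
  have "length (filter (\<lambda>x. x \<le> b) ?xs) = size (filter_mset (\<lambda>x. x \<le> b) ?M)"
    by (metis mset_filter mset_sorted_list_of_multiset size_mset)
  also have "\<dots> = card {z \<in> Z - {p}. dist p z \<le> b}"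
    using assms(1) by (simp add: filter_mset_image_mset filter_mset_mset_set)
  also have "\<dots> = nbhd_card Z p b"
    unfolding nbhd_card_def by (rule arg_cong[where f = card]) auto
  finally have "length (filter (\<lambda>x. x \<le> b) ?xs) = nbhd_card Z p b" .
  moreover have "k - 1 < length ?xs" using assms len by simp
  ultimately show ?thesis
    using sorted_nth_le_iff[of ?xs "k - 1" b] assms(2) by (auto simp: core_dist_def)
qed

lemma nbhd_card_mono:
  assumes "A \<subseteq> B" "finite B" "b \<le> b'"
  shows "nbhd_card A p b \<le> nbhd_card B p b'"
  unfolding nbhd_card_def using assms by (intro card_mono) auto

lemma exists_removed_neighbour:
  assumes "finite Y" "Y' \<subseteq> Y" "nbhd_card Y' p a < nbhd_card Y p a"
  obtains r where "r \<in> Y" "r \<notin> Y'" "dist p r \<le> a"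
proof -
  have "\<not> {z \<in> Y. z \<noteq> p \<and> dist p z \<le> a} \<subseteq> Y'"
  proof
    assume "{z \<in> Y. z \<noteq> p \<and> dist p z \<le> a} \<subseteq> Y'"
    moreover have "finite Y'" using assms(1,2) finite_subset by blast
    ultimately have "nbhd_card Y p a \<le> nbhd_card Y' p a"
      unfolding nbhd_card_def by (intro card_mono) auto
    then show False using assms(3) by simp
  qed
  then show ?thesis using that by blast
qed

lemma core_dist_antimono:
  assumes "finite X" "B \<subseteq> X" "p \<in> B" "1 \<le> k" "k < card B"
  shows "core_dist k X p \<le> core_dist k B p"
proof -
  have fB: "finite B" using assms(1,2) finite_subset by blast
  have cB: "k \<le> card (B - {p})" using assms(3,5) fB by simp
  also have "\<dots> \<le> card (X - {p})" using assms(1,2) by (intro card_mono) auto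
  finally have cX: "k \<le> card (X - {p})" .
  let ?b = "core_dist k B p"
  have "k \<le> nbhd_card B p ?b" using core_dist_le_iff[OF fB assms(4) cB, of ?b] by simp
  also have "\<dots> \<le> nbhd_card X p ?b" by (rule nbhd_card_mono[OF assms(2,1) order_refl])
  finally show ?thesis using core_dist_le_iff[OF assms(1,4) cX] by simp
qed

lemma core_points_iff:
  assumes "finite Y" "0 \<le> e"
  shows "p \<in> core_points k Y e \<longleftrightarrow> p \<in> Y \<and> k \<le> nbhd_card Y p e"
proof -
  have "p \<in> Y \<Longrightarrow> {y \<in> Y. dist p y \<le> e} = insert p {z \<in> Y. z \<noteq> p \<and> dist p z \<le> e}"
    using assms(2) by auto
  then show ?thesis using assms(1) unfolding core_points_def nbhd_card_def by auto
qed

lemma core_points_mono: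
  assumes "Y \<subseteq> Y'" "finite Y'" "0 \<le> b" "b \<le> b'"
  shows "core_points k Y b \<subseteq> core_points k Y' b'"
proof
  fix p assume "p \<in> core_points k Y b"
  then have "p \<in> Y" "k \<le> nbhd_card Y p b"
    using core_points_iff[OF finite_subset[OF assms(1,2)] assms(3)] by auto
  then show "p \<in> core_points k Y' b'"
    using assms nbhd_card_mono[OF assms(1,2,4), of p] core_points_iff[OF assms(2)] by auto
qed


lemma core_points_subset: "core_points k Y e \<subseteq> Y"
  unfolding core_points_def by auto

lemma finite_core_rel: "finite Y \<Longrightarrow> finite (core_rel k Y e)"
  by (rule finite_subset[of _ "Y \<times> Y"]) (auto simp: core_rel_def core_points_def)

lemma core_rel_sym: "(a, b) \<in> core_rel k Y e \<Longrightarrow> (b, a) \<in> core_rel k Y e"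
  unfolding core_rel_def by (auto simp: dist_commute)

lemma cluster_subset_core_points: "C \<in> dbscan_clusters k Y e \<Longrightarrow> C \<subseteq> core_points k Y e"
  unfolding dbscan_clusters_def by auto

lemma cluster_of_core_point:
  assumes "p \<in> core_points k Y e"
  obtains C where "C \<in> dbscan_clusters k Y e" "p \<in> C"
  using assms that unfolding dbscan_clusters_def by blast

lemma cluster_rtrancl:
  assumes "C \<in> dbscan_clusters k Y e" "a \<in> C" "b \<in> C"
  shows "(a, b) \<in> (core_rel k Y e)\<^sup>*"
proof -
  have "sym ((core_rel k Y e)\<^sup>*)" by (intro sym_rtrancl symI) (rule core_rel_sym)
  moreover obtain p where "(p, a) \<in> (core_rel k Y e)\<^sup>*" "(p, b) \<in> (core_rel k Y e)\<^sup>*"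
    using assms unfolding dbscan_clusters_def by auto
  ultimately show ?thesis by (meson rtrancl_trans symD)
qed

lemma cluster_closed:
  assumes "C \<in> dbscan_clusters k Y e" "c \<in> C" "w \<in> core_points k Y e" "dist c w \<le> e"
  shows "w \<in> C"
proof -
  obtain p where p: "C = {q \<in> core_points k Y e. (p, q) \<in> (core_rel k Y e)\<^sup>*}"
    using assms(1) unfolding dbscan_clusters_def by auto
  have "(c, w) \<in> (core_rel k Y e)\<^sup>*"
    using assms p by (cases "c = w") (auto simp: core_rel_def)
  then show ?thesis using p assms(2,3) by (auto intro: rtrancl_trans)
qed

lemma finite_dbscan_clusters: "finite Y \<Longrightarrow> finite (dbscan_clusters k Y e)"
  using cluster_subset_core_points core_points_subset
  by (metis Pow_iff finite_Pow_iff finite_subset subsetI subset_trans)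


lemma edges_threshold_iff: "e \<in> edges (threshold G a) \<longleftrightarrow> (\<exists>w. snd G e = Some w \<and> w \<le> a)"
  unfolding edges_def threshold_def by (auto split: option.splits)

lemma snd_threshold:
  "snd (threshold G a) e = (case snd G e of None \<Rightarrow> None | Some x \<Rightarrow> if x \<le> a then Some x else None)"
  unfolding threshold_def by simp

lemma snd_complete_wgraph:
  "snd (complete_wgraph Z w) (p, q) = (if p \<in> Z \<and> q \<in> Z \<and> p \<noteq> q then Some (w p q) else None)"
  unfolding complete_wgraph_def by simp

lemma gunion_Some_cases: "snd (gunion G H) e = Some w \<Longrightarrow> snd G e = Some w \<or> snd H e = Some w"
  unfolding gunion_def by (auto split: option.splits if_splits simp: min_def)

lemma gunion_weight_le_left: "snd G e = Some x \<Longrightarrow> \<exists>w\<le>x. snd (gunion G H) e = Some w"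
  unfolding gunion_def by (auto split: option.splits)

lemma gunion_weight_le_right: "snd H e = Some x \<Longrightarrow> \<exists>w\<le>x. snd (gunion G H) e = Some w"
  unfolding gunion_def by (auto split: option.splits)

lemma finite_weights: "finite Gs \<Longrightarrow> finite {x. \<exists>G\<in>Gs. snd G e = Some x}"
  by (rule finite_subset[of _ "(\<lambda>G. the (snd G e)) ` Gs"]) force+

lemma gUnion_Some_member:
  assumes "finite Gs" "snd (gUnion Gs) e = Some w"
  shows "\<exists>G\<in>Gs. snd G e = Some w"
proof -
  let ?S = "{x. \<exists>G\<in>Gs. snd G e = Some x}"
  have "?S \<noteq> {}" "w = Min ?S"
    using assms(2) unfolding gUnion_def by (auto split: if_splits)
  then have "w \<in> ?S" using Min_in[OF finite_weights[OF assms(1)]] by simp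
  then show ?thesis by auto
qed

lemma gUnion_weight_le:
  assumes "finite Gs" "G \<in> Gs" "snd G e = Some x"
  shows "\<exists>w\<le>x. snd (gUnion Gs) e = Some w"
proof -
  let ?S = "{x. \<exists>G\<in>Gs. snd G e = Some x}"
  have "Min ?S \<le> x" using assms by (intro Min_le[OF finite_weights[OF assms(1)]]) auto
  moreover have "snd (gUnion Gs) e = Some (Min ?S)" unfolding gUnion_def using assms(2,3) by auto
  ultimately show ?thesis by blast
qed

lemma rho_sym: "rho k Z p q = rho k Z q p"
  unfolding rho_def by (auto simp: dist_commute max.commute max.left_commute)

lemma edges_threshold_rho_eq_core_rel:
  assumes fX: "finite X" and k: "1 \<le> k" "k < card X" and a: "0 \<le> a"
  shows "edges (threshold (complete_wgraph X (rho k X)) a) = core_rel k X a"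
proof -
  have core_dist: "core_dist k X p \<le> a \<longleftrightarrow> k \<le> nbhd_card X p a" if "p \<in> X" for p
    using core_dist_le_iff[OF fX k(1)] k(2) fX that by simp
  show ?thesis
    by (auto simp: edges_threshold_iff snd_complete_wgraph rho_def core_rel_def core_points_iff[OF fX a]
        core_dist split: if_splits)
qed


lemma Fset_subset: "Fset X k Y e \<subseteq> Y"
  unfolding Fset_def noise_points_def dbscan_clusters_def core_points_def by blast

lemma Xseq_antimono: "m \<le> m' \<Longrightarrow> Xseq X k eps m' \<subseteq> Xseq X k eps m"
proof (induction m' rule: dec_induct)
  case (step n)
  then show ?case using Fset_subset by (metis Xseq.simps(2) order_trans)
qed simp

lemma Xseq_subset: "Xseq X k eps m \<subseteq> X"
  using Xseq_antimono[of 0 m] by simp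

lemma finite_Xseq: "finite X \<Longrightarrow> finite (Xseq X k eps m)"
  using Xseq_subset by (rule finite_subset)

lemma Xseq_removal_level:
  assumes "p \<in> X" "p \<notin> Xseq X k eps b"
  obtains m where "m < b" "p \<in> Xseq X k eps m" "p \<notin> Xseq X k eps (Suc m)"
proof -
  obtain m where m: "p \<in> Xseq X k eps m" "p \<notin> Xseq X k eps (Suc m)"
    using exists_least_lemma[of "\<lambda>m. p \<notin> Xseq X k eps m"] assms by auto
  moreover have "m < b"
    using m(1) assms(2) Xseq_antimono[of b m] by (meson not_less subsetD)
  ultimately show ?thesis using that by blast
qed

lemma Xseq_thinning_level:
  assumes "finite X" "k \<le> nbhd_card X p a" "nbhd_card (Xseq X k eps b) p a < k"
  obtains m where "m < b" "k \<le> nbhd_card (Xseq X k eps m) p a"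
    "nbhd_card (Xseq X k eps (Suc m)) p a < k"
proof -
  obtain m where m: "k \<le> nbhd_card (Xseq X k eps m) p a" "nbhd_card (Xseq X k eps (Suc m)) p a < k"
    using exists_least_lemma[of "\<lambda>m. nbhd_card (Xseq X k eps m) p a < k"] assms(2,3) by force
  moreover have "m < b"
  proof (rule ccontr)
    assume "\<not> m < b"
    then have "Xseq X k eps m \<subseteq> Xseq X k eps b" by (intro Xseq_antimono) simp
    then have "nbhd_card (Xseq X k eps m) p a \<le> nbhd_card (Xseq X k eps b) p a"
      by (rule nbhd_card_mono[OF _ finite_Xseq[OF assms(1)] order_refl])
    then show False using m(1) assms(3) by linarith
  qed
  ultimately show ?thesis using that by blast
qed

lemma Bset_subset: "Bset Y e C \<subseteq> Y"
  unfolding Bset_def by auto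

lemma mem_BsetI: "c \<in> C \<Longrightarrow> y \<in> Y \<Longrightarrow> dist c y \<le> e \<Longrightarrow> y \<in> Bset Y e C"
  unfolding Bset_def using infdist_le[of c C y] by (auto simp: dist_commute)

lemma card_Bset_gt:
  assumes "finite Y" "C \<in> dbscan_clusters k Y e"
  shows "k < card (Bset Y e C)"
proof -
  obtain c where c: "c \<in> C" "c \<in> core_points k Y e"
    using assms(2) unfolding dbscan_clusters_def by auto
  then have "k < card {y \<in> Y. dist c y \<le> e}" unfolding core_points_def by simp
  also have "\<dots> \<le> card (Bset Y e C)"
    using finite_subset[OF Bset_subset assms(1)] mem_BsetI[OF c(1)] by (intro card_mono) auto
  finally show ?thesis .
qed

definition cluster_graph :: "nat \<Rightarrow> ('a::metric_space) set \<Rightarrow> real \<Rightarrow> 'a set \<Rightarrow> 'a wgraph" where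
  "cluster_graph k Y e C = threshold (complete_wgraph (Bset Y e C) (rho k (Bset Y e C))) e"

lemma snd_cluster_graph:
  "snd (cluster_graph k Y e C) (p, q) =
    (let B = Bset Y e C in
     if p \<in> B \<and> q \<in> B \<and> p \<noteq> q \<and> rho k B p q \<le> e then Some (rho k B p q) else None)"
  unfolding cluster_graph_def by (simp add: snd_threshold snd_complete_wgraph Let_def)

lemma Hseq_Suc:
  "Hseq X k eps (Suc m) =
    gunion (gUnion (cluster_graph k (Xseq X k eps m) (eps (Suc m))
                     ` dbscan_clusters k (Xseq X k eps m) (eps (Suc m))))
           (Hseq X k eps m)"
  by (simp add: cluster_graph_def)

lemma Hseq_weight_sym: "snd (Hseq X k eps L) (p, q) = snd (Hseq X k eps L) (q, p)"
proof (induction L)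
  case (Suc m)
  let ?Gs = "cluster_graph k (Xseq X k eps m) (eps (Suc m))
    ` dbscan_clusters k (Xseq X k eps m) (eps (Suc m))"
  have "snd G (p, q) = snd G (q, p)" if "G \<in> ?Gs" for G
    using that by (auto simp: snd_cluster_graph rho_sym Let_def)
  then have "snd (gUnion ?Gs) (p, q) = snd (gUnion ?Gs) (q, p)"
    unfolding gUnion_def by simp
  then show ?case unfolding Hseq_Suc gunion_def snd_conv Suc.IH by simp
qed simp

lemma rtrancl_Hseq_edges_sym:
  assumes "(p, q) \<in> (edges (threshold (Hseq X k eps L) a))\<^sup>*"
  shows "(q, p) \<in> (edges (threshold (Hseq X k eps L) a))\<^sup>*"
proof -
  have "sym ((edges (threshold (Hseq X k eps L) a))\<^sup>*)"
    by (intro sym_rtrancl symI) (metis edges_threshold_iff Hseq_weight_sym)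
  then show ?thesis using assms by (auto dest: symD)
qed

lemma Hseq_weight_antimono:
  assumes "L \<le> L'" "snd (Hseq X k eps L) e = Some w"
  shows "\<exists>w'\<le>w. snd (Hseq X k eps L') e = Some w'"
  using assms
proof (induction L' rule: dec_induct)
  case (step n)
  then obtain w' where "w' \<le> w" "snd (Hseq X k eps n) e = Some w'" by auto
  then show ?case unfolding Hseq_Suc by (meson gunion_weight_le_right order_trans)
qed auto

lemma Hseq_edges_mono:
  assumes "L \<le> L'" "b \<le> a"
  shows "edges (threshold (Hseq X k eps L) b) \<subseteq> edges (threshold (Hseq X k eps L') a)"
proof
  fix e assume "e \<in> edges (threshold (Hseq X k eps L) b)"
  then obtain w where w: "snd (Hseq X k eps L) e = Some w" "w \<le> b"
    unfolding edges_threshold_iff by auto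
  obtain w' where "w' \<le> w" "snd (Hseq X k eps L') e = Some w'"
    using Hseq_weight_antimono[OF assms(1) w(1)] by blast
  then show "e \<in> edges (threshold (Hseq X k eps L') a)"
    using w(2) assms(2) unfolding edges_threshold_iff by auto
qed

lemma Hseq_weight_is_rho:
  assumes "finite X" "snd (Hseq X k eps L) (p, q) = Some w"
  shows "p \<noteq> q \<and> (\<exists>B \<subseteq> X. p \<in> B \<and> q \<in> B \<and> k < card B \<and> w = rho k B p q)"
  using assms(2)
proof (induction L)
  case (Suc m)
  let ?Y = "Xseq X k eps m" and ?e = "eps (Suc m)"
  have fY: "finite ?Y" using finite_Xseq[OF assms(1)] .
  from gunion_Some_cases[OF Suc.prems[unfolded Hseq_Suc]]
  consider "snd (gUnion (cluster_graph k ?Y ?e ` dbscan_clusters k ?Y ?e)) (p, q) = Some w"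
    | "snd (Hseq X k eps m) (p, q) = Some w" by blast
  then show ?case
  proof cases
    case 1
    then obtain C where C: "C \<in> dbscan_clusters k ?Y ?e" "snd (cluster_graph k ?Y ?e C) (p, q) = Some w"
      using gUnion_Some_member finite_dbscan_clusters[OF fY] by blast
    have "Bset ?Y ?e C \<subseteq> X" using Bset_subset Xseq_subset by blast
    then show ?thesis
      using C card_Bset_gt[OF fY C(1)] by (auto simp: snd_cluster_graph Let_def split: if_splits)
  qed (use Suc.IH in blast)
qed simp

lemma edges_Hseq_subset_edges_rho:
  assumes "finite X" "1 \<le> k"
  shows "edges (threshold (Hseq X k eps i) a) \<subseteq> edges (threshold (complete_wgraph X (rho k X)) a)"
proof clarify
  fix p q assume "(p, q) \<in> edges (threshold (Hseq X k eps i) a)"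
  then obtain w where w: "snd (Hseq X k eps i) (p, q) = Some w" "w \<le> a"
    unfolding edges_threshold_iff by auto
  then obtain B where B: "p \<noteq> q" "B \<subseteq> X" "p \<in> B" "q \<in> B" "k < card B" "w = rho k B p q"
    using Hseq_weight_is_rho[OF assms(1)] by blast
  have "rho k X p q \<le> rho k B p q"
    using core_dist_antimono[OF assms(1) B(2,3) assms(2) B(5)]
      core_dist_antimono[OF assms(1) B(2,4) assms(2) B(5)]
    unfolding rho_def by auto
  then show "(p, q) \<in> edges (threshold (complete_wgraph X (rho k X)) a)"
    using w B by (auto simp: edges_threshold_iff snd_complete_wgraph)
qed

lemma Hseq_Suc_weight_le:
  assumes "finite X" "C \<in> dbscan_clusters k (Xseq X k eps m) (eps (Suc m))"
    and "snd (cluster_graph k (Xseq X k eps m) (eps (Suc m)) C) e = Some x"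
  shows "\<exists>w\<le>x. snd (Hseq X k eps (Suc m)) e = Some w"
proof -
  let ?Gs = "cluster_graph k (Xseq X k eps m) (eps (Suc m))
    ` dbscan_clusters k (Xseq X k eps m) (eps (Suc m))"
  have "finite ?Gs" using finite_dbscan_clusters[OF finite_Xseq[OF assms(1)]] by blast
  then obtain w where "w \<le> x" "snd (gUnion ?Gs) e = Some w"
    using gUnion_weight_le assms(2,3) by blast
  then show ?thesis unfolding Hseq_Suc by (meson gunion_weight_le_left order_trans)
qed

lemma core_dist_Bset_le:
  assumes fY: "finite Y" and k: "1 \<le> k" and C: "C \<in> dbscan_clusters k Y e" "c \<in> C"
    and c: "c \<in> core_points k Y b" and b: "0 \<le> b" "b \<le> e"
  shows "core_dist k (Bset Y e C) c \<le> b"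
proof -
  let ?B = "Bset Y e C"
  have fB: "finite ?B" using fY Bset_subset by (rule finite_subset[rotated])
  have cB: "c \<in> ?B" using C c b by (auto intro: mem_BsetI simp: core_points_def)
  have "k \<le> nbhd_card Y c b" using c core_points_iff[OF fY b(1)] by blast
  also have "\<dots> \<le> nbhd_card ?B c b"
    unfolding nbhd_card_def using fB b(2) mem_BsetI[OF C(2)] by (intro card_mono) auto
  finally show ?thesis
    using core_dist_le_iff[OF fB k] card_Bset_gt[OF fY C(1)] cB fB by simp
qed

lemma core_rel_subset_Hseq_edges:
  assumes fX: "finite X" and k: "1 \<le> k" and b: "0 \<le> b" "b \<le> eps (Suc m)"
  shows "core_rel k (Xseq X k eps m) b \<subseteq> edges (threshold (Hseq X k eps (Suc m)) b)"
proof clarify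
  let ?Y = "Xseq X k eps m" and ?e = "eps (Suc m)"
  fix p q assume "(p, q) \<in> core_rel k ?Y b"
  then have pq: "p \<in> core_points k ?Y b" "q \<in> core_points k ?Y b" "p \<noteq> q" "dist p q \<le> b"
    unfolding core_rel_def by auto
  have fY: "finite ?Y" using finite_Xseq[OF fX] .
  have "core_points k ?Y b \<subseteq> core_points k ?Y ?e" by (rule core_points_mono[OF order_refl fY b])
  then have pq_e: "p \<in> core_points k ?Y ?e" "q \<in> core_points k ?Y ?e" using pq(1,2) by blast+
  obtain C where C: "C \<in> dbscan_clusters k ?Y ?e" "p \<in> C"
    using cluster_of_core_point[OF pq_e(1)] .
  have qC: "q \<in> C" using cluster_closed[OF C pq_e(2)] pq(4) b(2) by simp
  let ?B = "Bset ?Y ?e C"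
  have rho: "rho k ?B p q \<le> b"
    using core_dist_Bset_le[OF fY k C pq(1) b] core_dist_Bset_le[OF fY k C(1) qC pq(2) b] pq(3,4)
    unfolding rho_def by simp
  moreover have "p \<in> ?B" "q \<in> ?B"
    using C qC b pq by (auto intro!: mem_BsetI simp: core_points_def)
  ultimately have "snd (cluster_graph k ?Y ?e C) (p, q) = Some (rho k ?B p q)"
    using pq(3) b(2) by (simp add: snd_cluster_graph)
  then show "(p, q) \<in> edges (threshold (Hseq X k eps (Suc m)) b)"
    using Hseq_Suc_weight_le[OF fX C(1)] rho unfolding edges_threshold_iff by force
qed

lemma cluster_connected_in_Hseq:
  assumes fX: "finite X" and k: "1 \<le> k" and C: "C \<in> dbscan_clusters k (Xseq X k eps m) (eps (Suc m))"
    and L: "Suc m \<le> L" and e: "0 \<le> eps (Suc m)" "eps (Suc m) \<le> a" and c: "c \<in> C" "c' \<in> C"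
  shows "(c, c') \<in> (edges (threshold (Hseq X k eps L) a))\<^sup>*"
proof -
  have "core_rel k (Xseq X k eps m) (eps (Suc m))
      \<subseteq> edges (threshold (Hseq X k eps (Suc m)) (eps (Suc m)))"
    by (rule core_rel_subset_Hseq_edges[OF fX k e(1)]) simp
  also have "\<dots> \<subseteq> edges (threshold (Hseq X k eps L) a)" by (rule Hseq_edges_mono[OF L e(2)])
  finally have "core_rel k (Xseq X k eps m) (eps (Suc m)) \<subseteq> edges (threshold (Hseq X k eps L) a)" .
  then show ?thesis using rtrancl_mono cluster_rtrancl[OF C c] by blast
qed


section \<open>Grid cubes\<close>

lemma side_pos: "0 < e \<Longrightarrow> 0 < side e TYPE('n::finite)"
  unfolding side_def by simp

lemma sqrt_card_mul_side: "sqrt (real CARD('n)) * side e TYPE('n::finite) = e / 2"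
  unfolding side_def by simp

lemma frakN_ge: "3 * sqrt (real CARD('n)) - 1 \<le> real (frakN TYPE('n::finite))"
proof -
  have "sqrt (real CARD('n)) - 1 \<le> real (frakn TYPE('n))"
    unfolding frakn_def by linarith
  moreover have "2 * sqrt (real CARD('n)) \<le> real (frakm TYPE('n))"
    unfolding frakm_def by linarith
  ultimately show ?thesis unfolding frakN_def by simp
qed

lemma frakN_pos: "1 \<le> frakN TYPE('n::finite)"
proof -
  have "1 \<le> sqrt (real CARD('n))" by simp
  then show ?thesis using frakN_ge[where 'n = 'n] by linarith
qed

lemma le_frakN_mul_side:
  assumes "0 < e"
  shows "e \<le> real (frakN TYPE('n::finite)) * side e TYPE('n)"
proof -
  have "1 \<le> sqrt (real CARD('n))" by simp
  then have "2 * sqrt (real CARD('n)) \<le> real (frakN TYPE('n))"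
    using frakN_ge[where 'n = 'n] by linarith
  then have "2 * sqrt (real CARD('n)) * side e TYPE('n) \<le> real (frakN TYPE('n)) * side e TYPE('n)"
    using side_pos[OF assms, where 'n = 'n] by (intro mult_right_mono) auto
  then show ?thesis using sqrt_card_mul_side[of e, where 'n = 'n] by simp
qed

lemma three_halves_le_frakN_Suc_mul_side:
  assumes "0 < e"
  shows "3 * e / 2 \<le> (real (frakN TYPE('n::finite)) + 1) * side e TYPE('n)"
proof -
  have "3 * sqrt (real CARD('n)) * side e TYPE('n) \<le> (real (frakN TYPE('n)) + 1) * side e TYPE('n)"
    using frakN_ge[where 'n = 'n] side_pos[OF assms, where 'n = 'n] by (intro mult_right_mono) auto
  then show ?thesis using sqrt_card_mul_side[of e, where 'n = 'n] by simp
qed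

lemma abs_nth_le_dist: "\<bar>x$i - y$i\<bar> \<le> dist x y" for x y :: "real^'n::finite"
  using dist_vec_nth_le[of x i y] by (simp add: dist_real_def)

lemma dist_le_sqrt_card_mul:
  fixes x y :: "real^'n::finite"
  assumes "\<And>i. \<bar>x$i - y$i\<bar> \<le> a"
  shows "dist x y \<le> sqrt (real CARD('n)) * a"
proof -
  have a: "0 \<le> a" using assms[of undefined] by linarith
  have "(dist x y)\<^sup>2 = (\<Sum>i\<in>UNIV. (x$i - y$i)\<^sup>2)"
    unfolding dist_vec_def L2_set_def by (simp add: sum_nonneg dist_real_def)
  also have "\<dots> \<le> (\<Sum>i\<in>(UNIV::'n set). a\<^sup>2)"
    using assms a by (intro sum_mono) (metis abs_le_square_iff abs_of_nonneg)
  also have "\<dots> = (sqrt (real CARD('n)) * a)\<^sup>2" by (simp add: power_mult_distrib)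
  finally show ?thesis using a by (simp add: real_le_rsqrt real_sqrt_mult)
qed

lemma mem_cube:
  "x \<in> cube e j \<longleftrightarrow>
    (\<forall>i. real_of_int (j$i) * side e TYPE('n) \<le> x$i \<and> x$i \<le> (real_of_int (j$i) + 1) * side e TYPE('n))"
  for x :: "real^'n::finite"
  unfolding cube_def by simp

lemma cube_in_cubes: "cube e j \<in> cubes e"
  unfolding cubes_def by simp

lemma dist_same_cube:
  fixes x y :: "real^'n::finite"
  assumes "x \<in> cube e j" "y \<in> cube e j"
  shows "dist x y \<le> e / 2"
proof -
  have "\<bar>x$i - y$i\<bar> \<le> side e TYPE('n)" for i
  proof -
    have "real_of_int (j$i) * side e TYPE('n) \<le> x$i"
      "x$i \<le> real_of_int (j$i) * side e TYPE('n) + side e TYPE('n)"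
      "real_of_int (j$i) * side e TYPE('n) \<le> y$i"
      "y$i \<le> real_of_int (j$i) * side e TYPE('n) + side e TYPE('n)"
      using assms unfolding mem_cube by (auto simp: distrib_right)
    then show ?thesis by (simp add: abs_le_iff)
  qed
  then show ?thesis using dist_le_sqrt_card_mul sqrt_card_mul_side by metis
qed

lemma mem_thicken_cubeI:
  fixes x :: "real^'n::finite"
  assumes "0 \<le> side e TYPE('n)"
    and "\<And>i. (real_of_int (j$i) - real m) * side e TYPE('n) \<le> x$i
              \<and> x$i \<le> (real_of_int (j$i) + 1 + real m) * side e TYPE('n)"
  shows "x \<in> thicken e m (cube e j)"
proof -
  let ?s = "side e TYPE('n)"
  define y where "y = (\<chi> i. max (real_of_int (j$i) * ?s) (min ((real_of_int (j$i) + 1) * ?s) (x$i)))"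
  have "y \<in> cube e j" unfolding mem_cube y_def using assms(1) by (auto simp: algebra_simps)
  moreover have "\<bar>x$i - y$i\<bar> \<le> real m * ?s" for i
  proof -
    have clamp: "\<bar>t - max a (min b t)\<bar> \<le> d" if "a - d \<le> t" "t \<le> b + d" "a \<le> b" "0 \<le> d"
      for a b t d :: real
      using that by (auto simp: max_def min_def abs_le_iff)
    show ?thesis unfolding y_def vec_lambda_beta
      using assms(1) assms(2)[of i] by (intro clamp) (auto simp: algebra_simps)
  qed
  ultimately show ?thesis unfolding thicken_def by auto
qed

lemma cube_subset_thicken:
  fixes j j' :: "int^'n::finite"
  assumes "0 < e" "\<And>i. \<bar>j$i - j'$i\<bar> \<le> int m"
  shows "cube e j \<subseteq> thicken e m (cube e j')"
proof
  let ?s = "side e TYPE('n)"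
  have s: "0 < ?s" using side_pos[OF assms(1)] .
  fix y :: "real^'n" assume y: "y \<in> cube e j"
  show "y \<in> thicken e m (cube e j')"
  proof (rule mem_thicken_cubeI[OF less_imp_le[OF s]])
    fix i
    have "real_of_int (j'$i) - real m \<le> real_of_int (j$i)"
      "real_of_int (j$i) \<le> real_of_int (j'$i) + real m"
      using assms(2)[of i] by (auto simp: abs_le_iff)
    then have "(real_of_int (j'$i) - real m) * ?s \<le> real_of_int (j$i) * ?s"
      "(real_of_int (j$i) + 1) * ?s \<le> (real_of_int (j'$i) + 1 + real m) * ?s"
      using s by (auto intro!: mult_right_mono)
    then show "(real_of_int (j'$i) - real m) * ?s \<le> y$i \<and> y$i \<le> (real_of_int (j'$i) + 1 + real m) * ?s"
      using y unfolding mem_cube by (meson order_trans)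
  qed
qed

lemma mem_interior_cube:
  assumes "0 < e" "interior_cube X e A (cube e j)" "y \<in> X" "y \<in> cube e j"
  shows "y \<in> A"
  using assms cube_subset_thicken[OF assms(1), of j j 1] unfolding interior_cube_def by auto

definition cube_index :: "real \<Rightarrow> real^'n::finite \<Rightarrow> int^'n" where
  "cube_index e x = (\<chi> i. \<lfloor>x$i / side e TYPE('n)\<rfloor>)"

lemma mem_cube_index: "0 < e \<Longrightarrow> x \<in> cube e (cube_index e x)" for x :: "real^'n::finite"
  using floor_divide_lower floor_divide_upper[THEN less_imp_le] side_pos[of e, where 'n = 'n]
  unfolding mem_cube cube_index_def by auto

lemma abs_floor_diff_le:
  fixes a b :: real
  assumes "\<bar>a - b\<bar> \<le> of_int n"
  shows "\<bar>\<lfloor>a\<rfloor> - \<lfloor>b\<rfloor>\<bar> \<le> n"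
proof -
  have "a - b \<le> of_int n" "b - a \<le> of_int n" using assms by (simp_all add: abs_le_iff)
  moreover have "of_int \<lfloor>a\<rfloor> \<le> a" "a < of_int \<lfloor>a\<rfloor> + 1" "of_int \<lfloor>b\<rfloor> \<le> b" "b < of_int \<lfloor>b\<rfloor> + 1"
    by (rule of_int_floor_le real_of_int_floor_add_one_gt)+
  ultimately have "of_int (\<lfloor>a\<rfloor> - \<lfloor>b\<rfloor>) < (of_int (n + 1) :: real)"
    "of_int (\<lfloor>b\<rfloor> - \<lfloor>a\<rfloor>) < (of_int (n + 1) :: real)"
    by simp_all linarith+
  then have "\<lfloor>a\<rfloor> - \<lfloor>b\<rfloor> < n + 1" "\<lfloor>b\<rfloor> - \<lfloor>a\<rfloor> < n + 1" by (simp_all only: of_int_less_iff)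
  then show ?thesis by linarith
qed

lemma abs_cube_index_diff_le:
  fixes x y :: "real^'n::finite"
  assumes "0 < e" "\<bar>x$i - y$i\<bar> \<le> real N * side e TYPE('n)"
  shows "\<bar>cube_index e x $ i - cube_index e y $ i\<bar> \<le> int N"
proof -
  let ?s = "side e TYPE('n)"
  have s: "0 < ?s" using side_pos[OF assms(1)] .
  have "x$i / ?s - y$i / ?s = (x$i - y$i) / ?s" by (simp add: diff_divide_distrib)
  then have "\<bar>x$i / ?s - y$i / ?s\<bar> = \<bar>x$i - y$i\<bar> / ?s" using s by simp
  also have "\<dots> \<le> of_int (int N)" using assms(2) s by (simp add: pos_divide_le_eq)
  finally show ?thesis unfolding cube_index_def by (simp add: abs_floor_diff_le)
qed


section \<open>Deep points of a cluster\<close>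

text \<open>The points of a cluster C that F(Y, e) discards: those outside (\<partial>C)^N, N = \<open>frakN\<close>.\<close>

definition deep :: "(real^'n::finite) set \<Rightarrow> real \<Rightarrow> (real^'n) set \<Rightarrow> real^'n \<Rightarrow> bool" where
  "deep X e C x \<longleftrightarrow> x \<in> C \<and> x \<notin> cube_nbhd e (frakN TYPE('n)) (boundary_cubes_union X e C)"

lemma removed_point_deep:
  fixes X :: "(real^'n::finite) set"
  assumes "x \<in> Y" "x \<notin> Fset X k Y e"
  obtains C where "C \<in> dbscan_clusters k Y e" "deep X e C x"
proof -
  have "x \<in> core_points k Y e" using assms unfolding Fset_def noise_points_def by auto
  then obtain C where C: "C \<in> dbscan_clusters k Y e" "x \<in> C" by (rule cluster_of_core_point)
  have "x \<notin> cube_nbhd e (frakN TYPE('n)) (boundary_cubes_union X e C)"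
  proof
    assume "x \<in> cube_nbhd e (frakN TYPE('n)) (boundary_cubes_union X e C)"
    then have "x \<in> Fset X k Y e"
      unfolding Fset_def by (intro UnI1 UN_I[OF C(1)] IntI C(2))
    with assms(2) show False by contradiction
  qed
  with C(2) have "deep X e C x" unfolding deep_def by blast
  with C(1) show ?thesis by (rule that)
qed

lemma boundary_cube_subset:
  "T \<in> cubes e \<Longrightarrow> T \<inter> C \<noteq> {} \<Longrightarrow> \<not> interior_cube X e C T \<Longrightarrow> T \<subseteq> boundary_cubes_union X e C"
  unfolding boundary_cubes_union_def meeting_cubes_def by (intro Union_upper) simp

lemma deep_not_in_thicken:
  fixes X :: "(real^'n::finite) set"
  assumes "deep X e C x" "T \<in> cubes e" "T \<inter> boundary_cubes_union X e C \<noteq> {}"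
  shows "x \<notin> thicken e (frakN TYPE('n)) T"
proof -
  have "T \<in> meeting_cubes e (boundary_cubes_union X e C)"
    using assms(2,3) unfolding meeting_cubes_def by simp
  then have "thicken e (frakN TYPE('n)) T \<subseteq> cube_nbhd e (frakN TYPE('n)) (boundary_cubes_union X e C)"
    unfolding cube_nbhd_def by (rule UN_upper)
  then show ?thesis using assms(1) unfolding deep_def by blast
qed

lemma deep_near_meeting_cube_interior:
  fixes X :: "(real^'n::finite) set"
  assumes e: "0 < e" and dp: "deep X e C x" and x: "x \<in> cube e j0"
    and meet: "cube e j \<inter> C \<noteq> {}" and near: "\<And>i. \<bar>j$i - j0$i\<bar> \<le> int (frakN TYPE('n))"
  shows "interior_cube X e C (cube e j)"
proof (rule ccontr)
  assume "\<not> interior_cube X e C (cube e j)"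
  then have "cube e j \<subseteq> boundary_cubes_union X e C"
    using boundary_cube_subset[OF cube_in_cubes meet] by blast
  then have "x \<notin> thicken e (frakN TYPE('n)) (cube e j)"
    using deep_not_in_thicken[OF dp cube_in_cubes] meet by blast
  moreover have "x \<in> thicken e (frakN TYPE('n)) (cube e j)"
    using cube_subset_thicken[OF e, of j0 j] near x by (auto simp: abs_minus_commute)
  ultimately show False by contradiction
qed

lemma deep_near_cube_interior:
  fixes X :: "(real^'n::finite) set"
  assumes e: "0 < e" and dp: "deep X e C x" and x: "x \<in> cube e j0"
    and near: "\<And>i. \<bar>j$i - j0$i\<bar> \<le> int (frakN TYPE('n))"
  shows "interior_cube X e C (cube e j)"
proof -
  let ?N = "frakN TYPE('n)"
  have "L \<le> ?N \<longrightarrow> (\<forall>j. (\<forall>i. \<bar>j$i - j0$i\<bar> \<le> int L) \<longrightarrow> interior_cube X e C (cube e j))" for L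
  proof (induction L)
    case 0
    have "interior_cube X e C (cube e j0)"
      using x dp by (intro deep_near_meeting_cube_interior[OF e dp x]) (auto simp: deep_def)
    moreover have "j = j0" if "\<forall>i. \<bar>j$i - j0$i\<bar> \<le> int 0" for j :: "int^'n"
      using that by (simp add: vec_eq_iff)
    ultimately show ?case by blast
  next
    case (Suc L)
    show ?case
    proof (intro impI allI)
      fix j :: "int^'n" assume L: "Suc L \<le> ?N" and j: "\<forall>i. \<bar>j$i - j0$i\<bar> \<le> int (Suc L)"
      define j' where "j' = (\<chi> i. j0$i + max (- int L) (min (int L) (j$i - j0$i)))"
      have "\<bar>j'$i - j0$i\<bar> \<le> int L" for i unfolding j'_def by auto
      then have j': "interior_cube X e C (cube e j')" using Suc.IH L by simp
      have "\<bar>j$i - j'$i\<bar> \<le> int 1" for i using j[rule_format, of i] unfolding j'_def by auto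
      then have "cube e j \<subseteq> thicken e 1 (cube e j')" by (rule cube_subset_thicken[OF e])
      then have "cube e j \<inter> C \<noteq> {}"
        using j' cube_in_cubes unfolding interior_cube_def meeting_cubes_def by blast
      moreover have "\<bar>j$i - j0$i\<bar> \<le> int ?N" for i
        using j[rule_format, of i] L by (meson of_nat_le_iff order_trans)
      ultimately show "interior_cube X e C (cube e j)"
        by (rule deep_near_meeting_cube_interior[OF e dp x])
    qed
  qed
  then show ?thesis using near by blast
qed

lemma deep_ball_subset_cluster:
  fixes X :: "(real^'n::finite) set"
  assumes e: "0 < e" and dp: "deep X e C x" and y: "y \<in> X" "dist x y \<le> e"
  shows "y \<in> C"
proof -
  have "\<bar>y$i - x$i\<bar> \<le> real (frakN TYPE('n)) * side e TYPE('n)" for i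
    using abs_nth_le_dist[of y i x] y(2) le_frakN_mul_side[OF e, where 'n = 'n]
    by (simp add: dist_commute)
  then have "interior_cube X e C (cube e (cube_index e y))"
    by (intro deep_near_cube_interior[OF e dp mem_cube_index[OF e]] abs_cube_index_diff_le[OF e])
  then show ?thesis using mem_interior_cube[OF e _ y(1) mem_cube_index[OF e]] by blast
qed

text \<open>The cube diagonally adjacent to \<open>cube e j\<close> on the side of x touches \<open>cube e j\<close>,
  so x avoids its \<open>frakN\<close>-thickening.\<close>

lemma deep_far_from_boundary_cube:
  fixes X :: "(real^'n::finite) set"
  assumes e: "0 < e" and dp: "deep X e C x" and meet: "cube e j \<inter> C \<noteq> {}"
    and bd: "\<not> interior_cube X e C (cube e j)" and z: "z \<in> cube e j"
  shows "(real (frakN TYPE('n)) + 1) * side e TYPE('n) < dist x z"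
proof -
  let ?s = "side e TYPE('n)" and ?N = "frakN TYPE('n)"
  have s: "0 < ?s" using side_pos[OF e] .
  define jj where "jj = (\<chi> i. j$i + (if z$i \<le> x$i then 1 else -1))"
  define w where "w = (\<chi> i. if z$i \<le> x$i then (real_of_int (j$i) + 1) * ?s else real_of_int (j$i) * ?s)"
  have "w \<in> cube e j" "w \<in> cube e jj"
    unfolding mem_cube w_def jj_def using s by (auto simp: algebra_simps)
  then have "cube e jj \<inter> boundary_cubes_union X e C \<noteq> {}"
    using boundary_cube_subset[OF cube_in_cubes meet bd] by blast
  then have "x \<notin> thicken e ?N (cube e jj)" by (rule deep_not_in_thicken[OF dp cube_in_cubes])
  then obtain i where i: "\<not> ((real_of_int (jj$i) - real ?N) * ?s \<le> x$i
                              \<and> x$i \<le> (real_of_int (jj$i) + 1 + real ?N) * ?s)"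
    using mem_thicken_cubeI[OF less_imp_le[OF s]] by blast
  have zi: "real_of_int (j$i) * ?s \<le> z$i" "z$i \<le> (real_of_int (j$i) + 1) * ?s"
    using z unfolding mem_cube by auto
  have N: "1 \<le> real ?N" using frakN_pos[where 'n = 'n] by simp
  have "(real ?N + 1) * ?s < \<bar>x$i - z$i\<bar>"
  proof (cases "z$i \<le> x$i")
    case True
    have "(real_of_int (j$i) + 1 - real ?N) * ?s \<le> real_of_int (j$i) * ?s"
      using N s by (intro mult_right_mono) auto
    then have "(real_of_int (j$i) + 1 + 1 + real ?N) * ?s < x$i"
      using i zi True unfolding jj_def by auto
    then show ?thesis using zi True by (simp add: algebra_simps)
  next
    case False
    have "(real_of_int (j$i) + 1) * ?s \<le> (real_of_int (j$i) - 1 + 1 + real ?N) * ?s"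
      using N s by (intro mult_right_mono) auto
    then have "x$i < (real_of_int (j$i) - 1 - real ?N) * ?s"
      using i zi False unfolding jj_def by auto
    then show ?thesis using zi False by (simp add: algebra_simps)
  qed
  then show ?thesis using abs_nth_le_dist[of x i z] by linarith
qed

text \<open>Walk from x to y in steps shorter than a cube side and stop at the first cube that is not
  interior; it is within one step of an interior cube, so it still meets C.\<close>

lemma exists_boundary_cube_on_segment:
  fixes X :: "(real^'n::finite) set"
  assumes e: "0 < e" and x: "interior_cube X e C (cube e (cube_index e x))"
    and y: "y \<in> X" "y \<notin> C"
  obtains z where "z \<in> closed_segment x y" "cube e (cube_index e z) \<inter> C \<noteq> {}"
    "\<not> interior_cube X e C (cube e (cube_index e z))"
proof -
  let ?s = "side e TYPE('n)"
  have s: "0 < ?s" using side_pos[OF e] .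
  define M where "M = Suc (nat \<lceil>dist x y / ?s\<rceil>)"
  have M: "0 < real M" unfolding M_def by simp
  have "dist x y / ?s \<le> real M" unfolding M_def by linarith
  then have step: "dist x y / real M \<le> ?s"
    using s M by (simp add: pos_divide_le_eq divide_le_eq mult.commute)
  define z where "z l = x + (real l / real M) *\<^sub>R (y - x)" for l
  define good where "good l \<longleftrightarrow> interior_cube X e C (cube e (cube_index e (z l)))" for l
  have "good 0" using x unfolding good_def z_def by simp
  have "z M = y" unfolding z_def using M by simp
  then have "\<not> good M"
    using mem_interior_cube[OF e _ y(1) mem_cube_index[OF e]] y(2) unfolding good_def by metis
  have "\<exists>l. \<not> (\<not> good l \<or> M \<le> l) \<and> (\<not> good (Suc l) \<or> M \<le> Suc l)"
    by (rule exists_least_lemma) (use \<open>good 0\<close> M in auto)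
  then obtain l where "good l" "l < M" "\<not> good (Suc l) \<or> M \<le> Suc l" by auto
  then have l: "good l" "\<not> good (Suc l)" "Suc l \<le> M"
    using \<open>\<not> good M\<close> by (auto dest: le_antisym)
  have "\<bar>z (Suc l) $ i - z l $ i\<bar> \<le> real 1 * ?s" for i
  proof -
    have "z (Suc l) $ i - z l $ i = (y$i - x$i) / real M"
      unfolding z_def using M by (simp add: field_simps)
    then have "\<bar>z (Suc l) $ i - z l $ i\<bar> = \<bar>y$i - x$i\<bar> / real M" using M by simp
    also have "\<dots> \<le> dist x y / real M"
      using abs_nth_le_dist[of y i x] M by (simp add: divide_right_mono dist_commute)
    finally show ?thesis using step by simp
  qed
  then have "cube e (cube_index e (z (Suc l))) \<subseteq> thicken e 1 (cube e (cube_index e (z l)))"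
    by (intro cube_subset_thicken[OF e] abs_cube_index_diff_le[OF e])
  then have "cube e (cube_index e (z (Suc l))) \<inter> C \<noteq> {}"
    using l(1) cube_in_cubes unfolding good_def interior_cube_def meeting_cubes_def by blast
  moreover have "z (Suc l) \<in> closed_segment x y"
    unfolding in_segment(1) z_def using l(3) M
    by (intro exI[of _ "real (Suc l) / real M"]) (auto simp: algebra_simps)
  ultimately show ?thesis using l(2) that unfolding good_def by blast
qed

lemma exists_boundary_point_towards:
  fixes X :: "(real^'n::finite) set"
  assumes e: "0 < e" and dp: "deep X e C x" and y: "y \<in> X" "y \<notin> C"
  obtains c j where "c \<in> C" "c \<in> cube e j" "\<not> interior_cube X e C (cube e j)" "dist y c < dist y x - e"
proof -
  have "interior_cube X e C (cube e (cube_index e x))"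
    by (simp add: deep_near_cube_interior[OF e dp mem_cube_index[OF e]])
  then obtain z where z: "z \<in> closed_segment x y" and meet: "cube e (cube_index e z) \<inter> C \<noteq> {}"
    and bd: "\<not> interior_cube X e C (cube e (cube_index e z))"
    using exists_boundary_cube_on_segment[OF e _ y] by blast
  obtain c where c: "c \<in> C" "c \<in> cube e (cube_index e z)" using meet by blast
  have "(real (frakN TYPE('n)) + 1) * side e TYPE('n) < dist x z"
    by (rule deep_far_from_boundary_cube[OF e dp meet bd mem_cube_index[OF e]])
  moreover have "3 * e / 2 \<le> (real (frakN TYPE('n)) + 1) * side e TYPE('n)"
    by (rule three_halves_le_frakN_Suc_mul_side[OF e])
  moreover have "dist x y = dist x z + dist z y" using z between_mem_segment between by blast
  moreover have "dist z c \<le> e / 2" by (rule dist_same_cube[OF mem_cube_index[OF e] c(2)])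
  ultimately have "dist y c < dist y x - e"
    using dist_triangle[of y c z] by (simp add: dist_commute)
  with c bd show ?thesis by (rule that)
qed

lemma boundary_nbhd_retained:
  fixes X :: "(real^'n::finite) set"
  assumes e: "0 < e" and C: "C \<in> dbscan_clusters k Y e" "c \<in> C" and c: "c \<in> cube e j"
    and bd: "\<not> interior_cube X e C (cube e j)" and w: "w \<in> Y" "dist c w \<le> e"
  shows "w \<in> Fset X k Y e"
proof (cases "w \<in> core_points k Y e")
  case False
  then show ?thesis using w(1) unfolding Fset_def noise_points_def by blast
next
  case True
  have "cube e j \<subseteq> boundary_cubes_union X e C"
    using boundary_cube_subset[OF cube_in_cubes _ bd] C(2) c by blast
  then have "cube e j \<in> meeting_cubes e (boundary_cubes_union X e C)"
    using C(2) c cube_in_cubes unfolding meeting_cubes_def by blast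
  moreover have "w \<in> thicken e (frakN TYPE('n)) (cube e j)"
    unfolding thicken_def
  proof (intro CollectI bexI[OF _ c] allI)
    fix i
    show "\<bar>w$i - c$i\<bar> \<le> real (frakN TYPE('n)) * side e TYPE('n)"
      using abs_nth_le_dist[of w i c] w(2) le_frakN_mul_side[OF e, where 'n = 'n]
      by (simp add: dist_commute)
  qed
  ultimately have "w \<in> cube_nbhd e (frakN TYPE('n)) (boundary_cubes_union X e C) \<inter> C"
    using cluster_closed[OF C True w(2)] unfolding cube_nbhd_def by blast
  then show ?thesis using C(1) unfolding Fset_def by blast
qed

text \<open>If p lay outside C, the boundary point c of C found on the way from r to p would keep its
  whole e-neighbourhood, more than k points, within distance a of p.\<close>

lemma nbhd_card_Fset_ge_outside_deep_cluster:
  fixes X :: "(real^'n::finite) set"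
  assumes fY: "finite Y" and e: "0 < e" and C: "C \<in> dbscan_clusters k Y e" and r: "deep X e C r"
    and p: "p \<in> X" "p \<notin> C" "dist p r \<le> a"
  shows "k \<le> nbhd_card (Fset X k Y e) p a"
proof -
  obtain c j where c: "c \<in> C" "c \<in> cube e j" "\<not> interior_cube X e C (cube e j)"
    "dist p c < dist p r - e"
    using exists_boundary_point_towards[OF e r p(1,2)] .
  define W where "W = {w \<in> Y. dist c w \<le> e}"
  have "c \<in> core_points k Y e" using cluster_subset_core_points[OF C] c(1) by blast
  then have "k < card W" unfolding W_def core_points_def by simp
  moreover have "card W \<le> card (W - {p}) + 1"
    using fY unfolding W_def by (cases "p \<in> W") (simp_all add: W_def card_Suc_Diff1)
  moreover have "W - {p} \<subseteq> {z \<in> Fset X k Y e. z \<noteq> p \<and> dist p z \<le> a}"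
  proof
    fix w assume w: "w \<in> W - {p}"
    then have "w \<in> Y" "dist c w \<le> e" unfolding W_def by auto
    then have "w \<in> Fset X k Y e" by (rule boundary_nbhd_retained[OF e C c(1-3)])
    moreover have "dist p w \<le> a" using dist_triangle[of p w c] \<open>dist c w \<le> e\<close> c(4) p(3) by linarith
    ultimately show "w \<in> {z \<in> Fset X k Y e. z \<noteq> p \<and> dist p z \<le> a}" using w by blast
  qed
  then have "card (W - {p}) \<le> nbhd_card (Fset X k Y e) p a"
    unfolding nbhd_card_def using finite_subset[OF Fset_subset fY] by (intro card_mono) auto
  ultimately show ?thesis by linarith
qed

lemma deep_witness_of_thinning:
  fixes X :: "(real^'n::finite) set"
  assumes fY: "finite Y" and e: "0 < e" "e \<le> a" and p: "p \<in> X"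
    and dense: "k \<le> nbhd_card Y p a" and thin: "nbhd_card (Fset X k Y e) p a < k"
  obtains C r where "C \<in> dbscan_clusters k Y e" "deep X e C r" "p \<in> C" "dist p r \<le> e"
proof -
  have "nbhd_card (Fset X k Y e) p a < nbhd_card Y p a" using dense thin by linarith
  then obtain r0 where r0: "r0 \<in> Y" "r0 \<notin> Fset X k Y e" "dist p r0 \<le> a"
    by (rule exists_removed_neighbour[OF fY Fset_subset])
  obtain C0 where C0: "C0 \<in> dbscan_clusters k Y e" "deep X e C0 r0"
    using removed_point_deep[OF r0(1,2)] .
  have "p \<in> C0"
  proof (rule ccontr)
    assume "p \<notin> C0"
    with thin show False
      using nbhd_card_Fset_ge_outside_deep_cluster[OF fY e(1) C0 p _ r0(3)] by linarith
  qed
  then have "p \<in> core_points k Y e" using cluster_subset_core_points[OF C0(1)] by blast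
  then have "k \<le> nbhd_card Y p e" using core_points_iff[OF fY less_imp_le[OF e(1)]] by blast
  moreover have "nbhd_card (Fset X k Y e) p e \<le> nbhd_card (Fset X k Y e) p a"
    using finite_subset[OF Fset_subset fY] e(2) by (intro nbhd_card_mono) auto
  ultimately have "nbhd_card (Fset X k Y e) p e < nbhd_card Y p e" using thin by linarith
  then obtain r where r: "r \<in> Y" "r \<notin> Fset X k Y e" "dist p r \<le> e"
    by (rule exists_removed_neighbour[OF fY Fset_subset])
  obtain C where C: "C \<in> dbscan_clusters k Y e" "deep X e C r"
    using removed_point_deep[OF r(1,2)] .
  have "p \<in> C" using deep_ball_subset_cluster[OF e(1) C(2) p] r(3) by (simp add: dist_commute)
  with C r(3) show ?thesis using that by blast
qed


section \<open>Paths in H(i)\<close>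

locale construction_level =
  fixes X :: "(real^'n::finite) set" and k :: nat and eps :: "nat \<Rightarrow> real"
    and i :: nat and \<alpha> :: real
  assumes finite_X: "finite X" and k_pos: "1 \<le> k"
    and eps_0: "eps 0 = 0" and eps_mono: "strict_mono eps"
    and i_pos: "1 \<le> i" and eps_less_\<alpha>: "eps (i - 1) < \<alpha>" and \<alpha>_le_eps: "\<alpha> \<le> eps i"
begin

abbreviation "Z m \<equiv> Xseq X k eps m"
abbreviation "E \<equiv> edges (threshold (Hseq X k eps i) \<alpha>)"

lemma eps_Suc_pos: "0 < eps (Suc m)"
  using eps_mono eps_0 by (metis strict_mono_def zero_less_Suc)

lemma eps_Suc_le_\<alpha>: "Suc m \<le> i - 1 \<Longrightarrow> eps (Suc m) \<le> \<alpha>"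
  using eps_mono eps_less_\<alpha> by (meson order_trans less_imp_le strict_mono_less_eq)

lemma \<alpha>_pos: "0 < \<alpha>"
  using eps_mono eps_0 eps_less_\<alpha> by (metis le0 order.strict_trans1 strict_mono_less_eq)

lemma exists_deep_witness:
  assumes p: "p \<in> core_points k X \<alpha>" and sparse: "p \<notin> core_points k (Z (i - 1)) \<alpha>"
  obtains m C r where "Suc m \<le> i - 1" "C \<in> dbscan_clusters k (Z m) (eps (Suc m))"
    "deep X (eps (Suc m)) C r" "p \<in> C" "dist p r \<le> eps (Suc m)"
proof (cases "p \<in> Z (i - 1)")
  case False
  have "p \<in> X" using p core_points_subset by blast
  then obtain m where "m < i - 1" "p \<in> Z m" "p \<notin> Z (Suc m)"
    using False by (rule Xseq_removal_level)
  moreover obtain C where "C \<in> dbscan_clusters k (Z m) (eps (Suc m))" "deep X (eps (Suc m)) C p"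
    using removed_point_deep calculation(2,3) by (metis Xseq.simps(2))
  ultimately show ?thesis using that[of m C p] eps_Suc_pos[of m] by (simp add: deep_def)
next
  case True
  have fZ: "finite (Z m)" for m using finite_Xseq[OF finite_X] .
  have "p \<in> X" "k \<le> nbhd_card X p \<alpha>" using p core_points_iff[OF finite_X less_imp_le[OF \<alpha>_pos]] by auto
  moreover have "nbhd_card (Z (i - 1)) p \<alpha> < k"
    using sparse True core_points_iff[OF fZ less_imp_le[OF \<alpha>_pos]] by auto
  ultimately obtain m where m: "m < i - 1" "k \<le> nbhd_card (Z m) p \<alpha>" "nbhd_card (Z (Suc m)) p \<alpha> < k"
    using Xseq_thinning_level[OF finite_X] by blast
  moreover have "eps (Suc m) \<le> \<alpha>" using m(1) by (intro eps_Suc_le_\<alpha>) simp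
  ultimately obtain C r where "C \<in> dbscan_clusters k (Z m) (eps (Suc m))" "deep X (eps (Suc m)) C r"
      "p \<in> C" "dist p r \<le> eps (Suc m)"
    using deep_witness_of_thinning[OF fZ eps_Suc_pos _ \<open>p \<in> X\<close>] by (metis Xseq.simps(2))
  with m(1) show ?thesis by (intro that) auto
qed

lemma in_rtrancl_if_not_core:
  assumes IH: "\<And>c. (c, q) \<in> core_rel k X \<alpha> \<Longrightarrow> dist c q < dist p q \<Longrightarrow> (c, q) \<in> E\<^sup>*"
    and pq: "(p, q) \<in> core_rel k X \<alpha>" and sparse: "p \<notin> core_points k (Z (i - 1)) \<alpha>"
  shows "(p, q) \<in> E\<^sup>*"
proof -
  have p: "p \<in> core_points k X \<alpha>" and q: "q \<in> core_points k X \<alpha>" and pq_le: "dist p q \<le> \<alpha>"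
    using pq unfolding core_rel_def by auto
  obtain m C r where m: "Suc m \<le> i - 1" and C: "C \<in> dbscan_clusters k (Z m) (eps (Suc m))"
    and r: "deep X (eps (Suc m)) C r" and pC: "p \<in> C" and pr: "dist p r \<le> eps (Suc m)"
    using exists_deep_witness[OF p sparse] .
  let ?e = "eps (Suc m)"
  have e: "0 < ?e" "?e \<le> \<alpha>" using eps_Suc_pos eps_Suc_le_\<alpha>[OF m] .
  have conn: "(p, c) \<in> E\<^sup>*" if "c \<in> C" for c
    using cluster_connected_in_Hseq[OF finite_X k_pos C _ less_imp_le[OF e(1)] e(2) pC that] m by simp
  show ?thesis
  proof (cases "q \<in> C")
    case False
    have "q \<in> X" using q core_points_subset by blast
    then obtain c where c: "c \<in> C" "dist q c < dist q r - ?e"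
      using exists_boundary_point_towards[OF e(1) r _ False] by metis
    have "dist c q < dist p q"
      using c(2) dist_triangle[of q r p] pr by (simp add: dist_commute)
    moreover have "c \<in> core_points k X \<alpha>"
      using cluster_subset_core_points[OF C] c(1)
        core_points_mono[OF Xseq_subset finite_X less_imp_le[OF e(1)] e(2)] by blast
    ultimately have "(c, q) \<in> E\<^sup>*"
      using IH c(1) False q pq_le unfolding core_rel_def by fastforce
    with conn[OF c(1)] show ?thesis by (rule rtrancl_trans)
  qed (rule conn)
qed

lemma core_rel_subset_rtrancl: "core_rel k X \<alpha> \<subseteq> E\<^sup>*"
proof
  fix pq assume "pq \<in> core_rel k X \<alpha>"
  with finite_core_rel[OF finite_X] show "pq \<in> E\<^sup>*"
  proof (induction pq rule: finite_measure_induct[where f = "\<lambda>(p, q). dist p q"])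
    case (less pq)
    obtain p q where pq: "pq = (p, q)" by fastforce
    have IH: "(c, d) \<in> E\<^sup>*" if "(c, d) \<in> core_rel k X \<alpha>" "dist c d < dist p q" for c d
      using less.IH that pq by fastforce
    have rel: "(p, q) \<in> core_rel k X \<alpha>" using less.hyps pq by simp
    show ?case
    proof (cases "p \<in> core_points k (Z (i - 1)) \<alpha> \<and> q \<in> core_points k (Z (i - 1)) \<alpha>")
      case True
      then have "(p, q) \<in> core_rel k (Z (i - 1)) \<alpha>" using rel unfolding core_rel_def by simp
      then have "(p, q) \<in> E"
        using core_rel_subset_Hseq_edges[OF finite_X k_pos less_imp_le[OF \<alpha>_pos], where m = "i - 1"]
          \<alpha>_le_eps i_pos by auto
      then show ?thesis using pq by simp
    next
      case False
      then consider "p \<notin> core_points k (Z (i - 1)) \<alpha>" | "q \<notin> core_points k (Z (i - 1)) \<alpha>"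
        by blast
      then show ?thesis
      proof cases
        case 1
        then show ?thesis using in_rtrancl_if_not_core[OF _ rel] IH pq by blast
      next
        case 2
        then have "(q, p) \<in> E\<^sup>*"
          using in_rtrancl_if_not_core[OF _ core_rel_sym[OF rel]] IH by (simp add: dist_commute)
        then show ?thesis using pq rtrancl_Hseq_edges_sym by blast
      qed
    qed
  qed
qed

end

theorem lemma5p8:
  fixes X :: "(real^'n::finite) set" and k :: nat and eps :: "nat \<Rightarrow> real"
    and i :: nat and \<alpha> :: real
  assumes "CARD('n) \<ge> 2"
    and "finite X"
    and "1 \<le> k" and "k < card X"
    and "eps 0 = 0" and "strict_mono eps"
    and "1 \<le> i"
    and "eps (i - 1) < \<alpha>" and "\<alpha> \<le> eps i"
  shows "edges (threshold (Hseq X k eps i) \<alpha>)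
           \<subseteq> edges (threshold (complete_wgraph X (rho k X)) \<alpha>)
         \<and> (\<forall>(p, q) \<in> edges (threshold (complete_wgraph X (rho k X)) \<alpha>).
           (p, q) \<in> (edges (threshold (Hseq X k eps i) \<alpha>))\<^sup>*)"
proof
  interpret construction_level X k eps i \<alpha> using assms by unfold_locales
  show "edges (threshold (Hseq X k eps i) \<alpha>) \<subseteq> edges (threshold (complete_wgraph X (rho k X)) \<alpha>)"
    by (rule edges_Hseq_subset_edges_rho[OF assms(2,3)])
  have "edges (threshold (complete_wgraph X (rho k X)) \<alpha>) = core_rel k X \<alpha>"
    using edges_threshold_rho_eq_core_rel[OF assms(2-4)] \<alpha>_pos by simp
  then show "\<forall>(p, q) \<in> edges (threshold (complete_wgraph X (rho k X)) \<alpha>).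
      (p, q) \<in> (edges (threshold (Hseq X k eps i) \<alpha>))\<^sup>*"
    using core_rel_subset_rtrancl by auto
qed

end
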